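(* A nondecreasing sequence of positive integers is the detour sequence of a tree if and only if it is the sequence $1$, or the sequence $2,2$, or it has the form \[(a)_k,\ (a+1)_{k_1},\ (a+2)_{k_2},\ \ldots,\ (m)_{k_l}\] where $m \ge 3$ is an integer, $a=\left\lceil \frac{m+1}{2}\right\rceil$, $l=m-a$, $k_j \ge 2$ for $1\le j\le l$, and $k=1$ if $m$ is odd and $k=2$ if $m$ is even.
   Context: All graphs are finite and simple. The order of a path is its number of vertices. For a vertex $v$ of $G$, $\tau(v)$ is the order of a longest path in $G$ having $v$ as an endvertex. The detour sequence of $G$ is the nondecreasing sequence of the values $\tau(v)$, $v\in V(G)$ (one term per vertex). The notation $(n)_k$ denotes the integer $n$ repeated $k$ times consecutively. *)

theory Defs
  imports Complex_Main "HOL-Library.Multiset"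
begin

definition simple_graph :: "'a set \<Rightarrow> ('a \<Rightarrow> 'a \<Rightarrow> bool) \<Rightarrow> bool" where
  "simple_graph V E \<longleftrightarrow> finite V \<and> (\<forall>x y. E x y \<longrightarrow> E y x)
     \<and> (\<forall>x. \<not> E x x) \<and> (\<forall>x y. E x y \<longrightarrow> x \<in> V \<and> y \<in> V)"

definition is_path :: "'a set \<Rightarrow> ('a \<Rightarrow> 'a \<Rightarrow> bool) \<Rightarrow> 'a list \<Rightarrow> bool" where
  "is_path V E p \<longleftrightarrow> p \<noteq> [] \<and> distinct p \<and> set p \<subseteq> V
     \<and> (\<forall>i. Suc i < length p \<longrightarrow> E (p ! i) (p ! Suc i))"

definition is_cycle :: "'a set \<Rightarrow> ('a \<Rightarrow> 'a \<Rightarrow> bool) \<Rightarrow> 'a list \<Rightarrow> bool" where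
  "is_cycle V E c \<longleftrightarrow> length c \<ge> 3 \<and> is_path V E c \<and> E (last c) (hd c)"

definition connected_graph :: "'a set \<Rightarrow> ('a \<Rightarrow> 'a \<Rightarrow> bool) \<Rightarrow> bool" where
  "connected_graph V E \<longleftrightarrow>
     (\<forall>u\<in>V. \<forall>v\<in>V. \<exists>p. is_path V E p \<and> hd p = u \<and> last p = v)"

definition is_tree :: "'a set \<Rightarrow> ('a \<Rightarrow> 'a \<Rightarrow> bool) \<Rightarrow> bool" where
  "is_tree V E \<longleftrightarrow> simple_graph V E \<and> V \<noteq> {} \<and> connected_graph V E
     \<and> (\<nexists>c. is_cycle V E c)"

definition tau :: "'a set \<Rightarrow> ('a \<Rightarrow> 'a \<Rightarrow> bool) \<Rightarrow> 'a \<Rightarrow> nat" where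
  "tau V E v = Max {length p | p. is_path V E p \<and> (hd p = v \<or> last p = v)}"

definition detour_seq :: "'a set \<Rightarrow> ('a \<Rightarrow> 'a \<Rightarrow> bool) \<Rightarrow> nat list" where
  "detour_seq V E = sorted_list_of_multiset (image_mset (tau V E) (mset_set V))"

end

theory Submission
  imports Defs
begin

text \<open>
  In a tree the detour order \<open>\<tau>(v)\<close> is governed by a longest path \<open>P = p\<^sub>0 \<dots> p\<^sub>m\<^sub>-\<^sub>1\<close>:
  if \<open>p\<^sub>j\<close> is the vertex of \<open>P\<close> nearest to \<open>v\<close>, at distance \<open>r\<close>, then
  \<open>\<tau>(v) = r + 1 + max j (m - 1 - j)\<close>. The path to \<open>p\<^sub>j\<close> followed by the longer half of \<open>P\<close>
  gives \<open>\<ge>\<close>; maximality of \<open>P\<close> and the triangle inequality give \<open>\<le>\<close>. Hence every value lies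
  between \<open>a = \<lceil>(m+1)/2\<rceil>\<close> and \<open>m\<close>, the value \<open>a\<close> is attained only at the one or two centres of
  \<open>P\<close>, and every larger value at least twice on \<open>P\<close>. Conversely, hanging \<open>k\<^sub>j - 2\<close> leaves on the
  vertex \<open>p\<^sub>a\<^sub>-\<^sub>2\<^sub>+\<^sub>j\<close> of a path of order \<open>m\<close> realises any admissible sequence.
\<close>

section \<open>Paths\<close>

lemma is_path_iff_successively:
  "is_path V E p \<longleftrightarrow> p \<noteq> [] \<and> distinct p \<and> set p \<subseteq> V \<and> successively E p"
  unfolding is_path_def successively_conv_nth by blast

lemma is_path_rev:
  assumes "simple_graph V E" "is_path V E p"
  shows "is_path V E (rev p)"
proof -
  have "successively (\<lambda>a b. E b a) p"
    using assms by (auto simp: is_path_iff_successively simple_graph_def elim: successively_mono)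
  then show ?thesis using assms(2) by (simp add: is_path_iff_successively)
qed

lemma is_path_append:
  assumes "is_path V E xs" "is_path V E ys" "set xs \<inter> set ys = {}" "E (last xs) (hd ys)"
  shows "is_path V E (xs @ ys)"
  using assms unfolding is_path_iff_successively by (auto simp: successively_append_iff)

lemma is_path_take: "is_path V E p \<Longrightarrow> 0 < n \<Longrightarrow> is_path V E (take n p)"
  unfolding is_path_def by (auto dest: in_set_takeD)

lemma is_path_drop: "is_path V E p \<Longrightarrow> n < length p \<Longrightarrow> is_path V E (drop n p)"
  unfolding is_path_def by (auto dest: in_set_dropD)

lemma is_path_singleton: "x \<in> V \<Longrightarrow> is_path V E [x]"
  unfolding is_path_def by auto

lemma is_path_edge: "simple_graph V E \<Longrightarrow> E x y \<Longrightarrow> is_path V E [x, y]"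
  unfolding is_path_def simple_graph_def by (auto simp: nth_Cons split: nat.splits)

lemma is_path_ends_in: "is_path V E p \<Longrightarrow> hd p \<in> V \<and> last p \<in> V"
  unfolding is_path_def by auto

lemma path_hd_eq_last_singleton:
  assumes "is_path V E p" "hd p = last p"
  shows "p = [hd p]"
proof (cases p)
  case (Cons x p')
  have "x \<notin> set p'" using assms(1) Cons by (simp add: is_path_def)
  moreover have "p' \<noteq> [] \<Longrightarrow> last p' \<in> set p'" by simp
  ultimately show ?thesis using assms(2) Cons by (cases "p' = []") auto
qed (use assms in \<open>simp add: is_path_def\<close>)

lemma successively_append_Cons:
  "successively P (xs @ [z]) \<Longrightarrow> successively P (z # ys) \<Longrightarrow> successively P (xs @ z # ys)"
  by (auto simp: successively_append_iff)

lemma path_from_walk: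
  assumes "w \<noteq> []" "set w \<subseteq> V" "successively E w"
  shows "\<exists>p. is_path V E p \<and> hd p = hd w \<and> last p = last w \<and> length p \<le> length w"
  using assms
proof (induction "length w" arbitrary: w rule: less_induct)
  case less
  show ?case
  proof (cases "distinct w")
    case True
    then show ?thesis using less.prems unfolding is_path_iff_successively by auto
  next
    case False
    then obtain xs y ys zs where w: "w = xs @ [y] @ ys @ [y] @ zs"
      using not_distinct_decomp by blast
    define w' where "w' = xs @ y # zs"
    have "successively E ((xs @ [y]) @ ys @ [y] @ zs)" "successively E ((xs @ [y] @ ys) @ y # zs)"
      using less.prems(3) unfolding w by simp_all
    then have "successively E (xs @ [y])" "successively E (y # zs)"
      unfolding successively_append_iff by blast+
    then have "successively E w'"
      unfolding w'_def by (rule successively_append_Cons)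
    moreover have "length w' < length w" "w' \<noteq> []" "set w' \<subseteq> V"
      using less.prems(2) unfolding w'_def w by auto
    moreover have "hd w' = hd w" unfolding w'_def w by (cases xs) simp_all
    moreover have "last w' = last w" unfolding w'_def w by (cases zs) simp_all
    ultimately show ?thesis
      using less.hyps by (metis order.strict_implies_order order_trans)
  qed
qed

lemma is_cycle_of_two_paths:
  assumes sg: "simple_graph V E"
    and p: "is_path V E (x # A @ [z])" and q: "is_path V E (x # C @ [z])"
    and disj: "set A \<inter> set C = {}" and ne: "A @ C \<noteq> []"
  shows "is_cycle V E (x # A @ z # rev C)"
proof -
  have sym: "\<And>a b. E a b \<Longrightarrow> E b a" using sg by (simp add: simple_graph_def)
  have sC: "successively E (x # C @ [z])" using q by (simp add: is_path_iff_successively)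
  have "successively (\<lambda>a b. E b a) (C @ [z])"
    using sC by (auto simp: successively_Cons sym elim: successively_mono)
  then have "successively E (z # rev C)" using successively_rev[of E "C @ [z]"] by simp
  then have "successively E (x # A @ z # rev C)"
    using successively_append_Cons[of E "x # A" z "rev C"] p
    by (simp add: is_path_iff_successively)
  moreover have "E (last (x # A @ z # rev C)) x"
  proof (cases C)
    case Nil then show ?thesis using sC by (simp add: sym)
  next
    case (Cons c C') then show ?thesis using sC by (simp add: sym last_rev)
  qed
  moreover have "length (x # A @ z # rev C) \<ge> 3" using ne by (cases A; cases C) auto
  ultimately show ?thesis
    using p q disj unfolding is_cycle_def is_path_iff_successively by auto
qed

lemma path_unique_if_acyclic:
  assumes sg: "simple_graph V E" and acyclic: "\<nexists>c. is_cycle V E c"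
  shows "is_path V E p \<Longrightarrow> is_path V E q \<Longrightarrow> hd p = hd q \<Longrightarrow> last p = last q \<Longrightarrow> p = q"
proof (induction p arbitrary: q)
  case Nil
  then show ?case by (simp add: is_path_def)
next
  case (Cons x p')
  obtain q' where q: "q = x # q'"
    using Cons.prems by (cases q) (auto simp: is_path_def)
  consider "p' = [] \<or> q' = []"
    | "p' \<noteq> []" "q' \<noteq> []" "hd p' = hd q'"
    | "p' \<noteq> []" "q' \<noteq> []" "hd p' \<noteq> hd q'"
    by blast
  then show ?case
  proof cases
    case 1
    then have "hd q = last q \<or> hd (x # p') = last (x # p')" using Cons.prems q by auto
    then have "q = [x] \<and> x # p' = [x]"
      using Cons.prems q path_hd_eq_last_singleton by (metis list.sel(1))
    then show ?thesis by simp
  next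
    case 2
    then have "is_path V E p'" "is_path V E q'"
      using Cons.prems q by (auto simp: is_path_iff_successively successively_Cons)
    moreover have "last p' = last q'" using 2 Cons.prems q by simp
    ultimately have "p' = q'" using Cons.IH 2 by blast
    then show ?thesis using q by simp
  next
    case 3
    have "last p' = last q'" using 3 Cons.prems q by simp
    then have "last p' \<in> set p'" "last p' \<in> set q'" using 3 last_in_set by metis+
    then obtain A z B where pA: "p' = A @ z # B" and zq: "z \<in> set q'" and Aq: "\<forall>y\<in>set A. y \<notin> set q'"
      using split_list_first_prop[of p' "\<lambda>y. y \<in> set q'"] by metis
    obtain C D where qC: "q' = C @ z # D" using zq by (meson split_list)
    have "is_path V E (take (Suc (length A) + 1) (x # p'))"
      using Cons.prems(1) by (rule is_path_take) simp
    then have pz: "is_path V E (x # A @ [z])" using pA by simp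
    have "is_path V E (take (Suc (length C) + 1) q)"
      using Cons.prems(2) by (rule is_path_take) simp
    then have qz: "is_path V E (x # C @ [z])" using q qC by simp
    have "A @ C \<noteq> []" using 3 pA qC by auto
    moreover have "set A \<inter> set C = {}" using Aq qC by auto
    ultimately have "is_cycle V E (x # A @ z # rev C)"
      using is_cycle_of_two_paths[OF sg pz qz] by blast
    then show ?thesis using acyclic by blast
  qed
qed

lemma connected_graph_if_paths_to_root:
  assumes sg: "simple_graph V E"
    and root: "\<And>v. v \<in> V \<Longrightarrow> \<exists>p. is_path V E p \<and> hd p = v \<and> last p = r"
  shows "connected_graph V E"
  unfolding connected_graph_def
proof (intro ballI)
  fix u v assume "u \<in> V" "v \<in> V"
  then obtain p q where p: "is_path V E p" "hd p = u" "last p = r"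
    and q: "is_path V E q" "hd q = v" "last q = r"
    using root by blast
  obtain p' where p': "p = p' @ [r]" using p by (metis append_butlast_last_id is_path_def)
  have "rev q \<noteq> []" "hd (rev q) = r" using q by (auto simp: is_path_def hd_rev)
  then obtain q' where q': "rev q = r # q'" by (metis list.collapse)
  have "successively E (p' @ [r])" "successively E (r # q')"
    using p(1) is_path_rev[OF sg q(1)] p' q' by (simp_all add: is_path_iff_successively)
  then have "successively E (p' @ r # q')" by (rule successively_append_Cons)
  moreover have "set (p' @ r # q') \<subseteq> V"
    using p(1) is_path_rev[OF sg q(1)] p' q' by (auto simp: is_path_def)
  moreover have "hd (p' @ r # q') = u" using p(2) p' by (cases p') simp_all
  moreover have "last (p' @ r # q') = last (rev q)" using q' by simp
  then have "last (p' @ r # q') = v" using q(2) by (simp add: last_rev)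
  ultimately show "\<exists>p. is_path V E p \<and> hd p = u \<and> last p = v"
    using path_from_walk[of "p' @ r # q'" V E] by auto
qed

lemma cycle_vertex_two_neighbours:
  assumes sg: "simple_graph V E" and c: "is_cycle V E c" and x: "x \<in> set c"
  shows "\<exists>y z. y \<noteq> z \<and> y \<in> set c \<and> z \<in> set c \<and> E x y \<and> E x z"
proof -
  have sym: "\<And>a b. E a b \<Longrightarrow> E b a" using sg by (simp add: simple_graph_def)
  let ?n = "length c"
  have n: "?n \<ge> 3" and dc: "distinct c" and cl: "E (c ! (?n - 1)) (c ! 0)"
    and ed: "\<And>i. Suc i < ?n \<Longrightarrow> E (c ! i) (c ! Suc i)"
    using c by (auto simp: is_cycle_def is_path_def hd_conv_nth last_conv_nth)
  have neq: "\<And>a b. a < ?n \<Longrightarrow> b < ?n \<Longrightarrow> a \<noteq> b \<Longrightarrow> c ! a \<noteq> c ! b"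
    using dc by (simp add: nth_eq_iff_index_eq)
  obtain i where i: "i < ?n" "x = c ! i" using x by (metis in_set_conv_nth)
  define pre where "pre = (if i = 0 then ?n - 1 else i - 1)"
  define suc where "suc = (if i = ?n - 1 then 0 else Suc i)"
  have "E x (c ! pre)" "E x (c ! suc)"
    using i n cl ed[of "i - 1"] ed[of i] sym unfolding pre_def suc_def by auto
  moreover have "c ! pre \<noteq> c ! suc"
    using i n unfolding pre_def suc_def by (intro neq) auto
  moreover have "c ! pre \<in> set c" "c ! suc \<in> set c"
    using i n unfolding pre_def suc_def by (auto intro!: nth_mem)
  ultimately show ?thesis by blast
qed

section \<open>Trees given by parent functions\<close>

definition parent_graph :: "(nat \<Rightarrow> nat) \<Rightarrow> nat \<Rightarrow> nat \<Rightarrow> nat \<Rightarrow> bool" where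
  "parent_graph par N x y \<longleftrightarrow> x < N \<and> y < N \<and> ((0 < y \<and> x = par y) \<or> (0 < x \<and> y = par x))"

context
  fixes par :: "nat \<Rightarrow> nat" and N :: nat
  assumes par_less: "\<And>n. 0 < n \<Longrightarrow> n < N \<Longrightarrow> par n < n"
begin

lemma simple_graph_parent_graph: "simple_graph {0..<N} (parent_graph par N)"
proof -
  have "\<not> parent_graph par N x x" for x
    using par_less[of x] by (auto simp: parent_graph_def)
  then show ?thesis unfolding simple_graph_def by (auto simp: parent_graph_def)
qed

lemma parent_graph_smaller_neighbour:
  assumes "parent_graph par N x y" "y < x"
  shows "y = par x"
proof -
  have "(0 < y \<and> x = par y) \<or> (0 < x \<and> y = par x)"
    using assms(1) unfolding parent_graph_def by (elim conjE)
  moreover have "y < N"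
    using assms(1) unfolding parent_graph_def by (elim conjE)
  then have "\<not> (0 < y \<and> x = par y)"
    using par_less[of y] assms(2) by (intro notI) simp
  ultimately show ?thesis by (elim disjE conjE) simp_all
qed

lemma path_to_root_parent_graph:
  "n < N \<Longrightarrow> \<exists>p. is_path {0..<N} (parent_graph par N) p \<and> hd p = n \<and> last p = 0 \<and> set p \<subseteq> {..n}"
proof (induction n rule: less_induct)
  case (less n)
  show ?case
  proof (cases "n = 0")
    case True
    then have "is_path {0..<N} (parent_graph par N) [n]"
      using less.prems by (simp add: is_path_singleton)
    then show ?thesis using True by (intro exI[of _ "[n]"]) simp
  next
    case False
    then have pn: "par n < n" using less.prems by (simp add: par_less)
    then have "par n < N" using less.prems by simp
    then obtain p where p: "is_path {0..<N} (parent_graph par N) p" "hd p = par n" "last p = 0"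
      "set p \<subseteq> {..par n}"
      using less.IH[OF pn] by blast
    have "is_path {0..<N} (parent_graph par N) ([n] @ p)"
    proof (rule is_path_append)
      show "is_path {0..<N} (parent_graph par N) [n]" using less.prems by (simp add: is_path_singleton)
      show "set [n] \<inter> set p = {}" using p(4) pn by auto
      show "parent_graph par N (last [n]) (hd p)"
        using p(2) \<open>par n < N\<close> False less.prems by (simp add: parent_graph_def)
    qed (rule p(1))
    moreover have "last ([n] @ p) = 0" "set ([n] @ p) \<subseteq> {..n}"
      using p pn by (auto simp: is_path_def)
    ultimately show ?thesis by (intro exI[of _ "[n] @ p"]) simp
  qed
qed

text \<open>The largest vertex of a cycle would need two distinct smaller neighbours, but its only
  smaller neighbour is its parent.\<close>
lemma parent_graph_acyclic: "\<nexists>c. is_cycle {0..<N} (parent_graph par N) c"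
proof
  assume "\<exists>c. is_cycle {0..<N} (parent_graph par N) c"
  then obtain c where c: "is_cycle {0..<N} (parent_graph par N) c" by blast
  have "c \<noteq> []" using c by (auto simp: is_cycle_def)
  then have x: "Max (set c) \<in> set c" by simp
  obtain y z where yz: "y \<noteq> z" "y \<in> set c" "z \<in> set c"
    "parent_graph par N (Max (set c)) y" "parent_graph par N (Max (set c)) z"
    using cycle_vertex_two_neighbours[OF simple_graph_parent_graph c x] by blast
  have "y \<noteq> Max (set c)" "z \<noteq> Max (set c)"
    using yz simple_graph_parent_graph by (auto simp: simple_graph_def)
  then have "y < Max (set c)" "z < Max (set c)"
    using yz by (simp_all add: order.not_eq_order_implies_strict)
  then have "y = par (Max (set c))" "z = par (Max (set c))"
    using yz(4,5) parent_graph_smaller_neighbour by blast+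
  then show False using yz(1) by simp
qed

lemma is_tree_parent_graph:
  assumes "0 < N" shows "is_tree {0..<N} (parent_graph par N)"
proof -
  have "connected_graph {0..<N} (parent_graph par N)"
    using path_to_root_parent_graph
    by (intro connected_graph_if_paths_to_root[OF simple_graph_parent_graph, of 0]) auto
  then show ?thesis
    unfolding is_tree_def using assms simple_graph_parent_graph parent_graph_acyclic by auto
qed

end

section \<open>The shape of detour sequences\<close>

definition min_detour :: "nat \<Rightarrow> nat" where
  "min_detour m = (m + 2) div 2"

text \<open>The detour order of vertex \<open>i\<close> (counted from 0) of a longest path of order \<open>m\<close>.\<close>
definition spine_detour :: "nat \<Rightarrow> nat \<Rightarrow> nat" where
  "spine_detour m i = 1 + max i (m - 1 - i)"

definition runs_above :: "nat \<Rightarrow> (nat \<Rightarrow> nat) \<Rightarrow> nat \<Rightarrow> nat list" where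
  "runs_above a c l = concat (map (\<lambda>j. replicate (c j) (a + 1 + j)) [0..<l])"

text \<open>\<open>ks ! j\<close> is the multiplicity \<open>k\<^sub>j\<^sub>+\<^sub>1\<close> of the value \<open>a + 1 + j\<close> in the paper's notation.\<close>
definition detour_pattern :: "nat \<Rightarrow> nat list \<Rightarrow> nat list" where
  "detour_pattern m ks = replicate (if odd m then 1 else 2) (min_detour m)
     @ runs_above (min_detour m) (\<lambda>j. ks ! j) (m - min_detour m)"

lemma nat_ceiling_half: "nat \<lceil>real (m + 1) / 2\<rceil> = min_detour m"
proof (cases "odd m")
  case True
  then obtain q where q: "m = 2 * q + 1" by (metis oddE)
  then have "real (m + 1) / 2 = real (q + 1)" by simp
  then show ?thesis using q by (simp only: ceiling_of_nat nat_int) (simp add: min_detour_def)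
next
  case False
  then obtain q where q: "m = 2 * q" by (metis evenE)
  then have "real (m + 1) / 2 = real q + 1 / 2" by (simp add: field_simps)
  then have "\<lceil>real (m + 1) / 2\<rceil> = int q + 1" by (simp add: ceiling_eq_iff)
  then show ?thesis using q by (simp add: min_detour_def)
qed

lemma min_detour_le_spine_detour: "i < m \<Longrightarrow> min_detour m \<le> spine_detour m i"
  unfolding min_detour_def spine_detour_def by (simp add: max_def; arith)

lemma card_spine_detour:
  assumes "0 < m"
  shows "card {i. i < m \<and> spine_detour m i = t} =
    (if t = min_detour m then (if odd m then 1 else 2) else if min_detour m < t \<and> t \<le> m then 2 else 0)"
proof -
  have "{i. i < m \<and> spine_detour m i = t} =
      (if t = min_detour m then (if odd m then {m div 2} else {m div 2 - 1, m div 2})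
       else if min_detour m < t \<and> t \<le> m then {t - 1, m - t} else {})"
    using assms unfolding spine_detour_def min_detour_def by (auto simp: max_def; presburger)
  moreover have "m div 2 - 1 \<noteq> m div 2" if "even m" using assms that by auto
  moreover have "t - 1 \<noteq> m - t" if "min_detour m < t" "t \<le> m"
    using that unfolding min_detour_def by arith
  ultimately show ?thesis by auto
qed

lemma count_runs_above:
  "count (mset (runs_above a c l)) t = (if a < t \<and> t \<le> a + l then c (t - a - 1) else 0)"
  by (induction l) (auto simp: runs_above_def)

lemma set_runs_above: "set (runs_above a c l) \<subseteq> {a<..a + l}"
  by (auto simp: runs_above_def)

lemma sorted_runs_above: "sorted (runs_above a c l)"
proof (induction l)
  case (Suc l)
  then show ?case using set_runs_above[of a c l] by (auto simp: runs_above_def sorted_append)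
qed (simp add: runs_above_def)

lemma sorted_detour_pattern: "sorted (detour_pattern m ks)"
  using sorted_runs_above set_runs_above
  by (fastforce simp: detour_pattern_def sorted_append)

lemma count_detour_pattern:
  "count (mset (detour_pattern m ks)) t =
    (if t = min_detour m then (if odd m then 1 else 2)
     else if min_detour m < t \<and> t \<le> m then ks ! (t - min_detour m - 1) else 0)"
  unfolding detour_pattern_def by (auto simp: count_runs_above)

lemma count_image_mset_set:
  "finite A \<Longrightarrow> count (image_mset f (mset_set A)) t = card {a \<in> A. f a = t}"
  by (simp add: count_image_mset' Collect_conj_eq Int_commute eq_commute)

lemma detour_seq_eqI:
  assumes "finite V" "\<And>t. card {v \<in> V. tau V E v = t} = count (mset xs) t" "sorted xs"
  shows "detour_seq V E = xs"
proof -
  have "image_mset (tau V E) (mset_set V) = mset xs"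
    using assms(1,2) by (simp add: multiset_eq_iff count_image_mset_set)
  then show ?thesis unfolding detour_seq_def using assms(3) by (simp add: sorted_sort_id)
qed

section \<open>Distances and detour orders in trees\<close>

locale tree_graph =
  fixes V :: "'a set" and E :: "'a \<Rightarrow> 'a \<Rightarrow> bool"
  assumes is_tree: "is_tree V E"
begin

lemma simple: "simple_graph V E"
  using is_tree by (simp add: is_tree_def)

lemma finite_vertices: "finite V"
  using simple by (simp add: simple_graph_def)

lemma path_unique:
  "is_path V E p \<Longrightarrow> is_path V E q \<Longrightarrow> hd p = hd q \<Longrightarrow> last p = last q \<Longrightarrow> p = q"
  using path_unique_if_acyclic simple is_tree by (auto simp: is_tree_def)

text \<open>The order of the unique path from \<open>x\<close> to \<open>y\<close>, i.e.\ their distance plus one.\<close>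
definition path_order :: "'a \<Rightarrow> 'a \<Rightarrow> nat" where
  "path_order x y = length (SOME p. is_path V E p \<and> hd p = x \<and> last p = y)"

lemma path_order_path: "is_path V E p \<Longrightarrow> path_order (hd p) (last p) = length p"
proof -
  assume p: "is_path V E p"
  let ?q = "SOME q. is_path V E q \<and> hd q = hd p \<and> last q = last p"
  have "is_path V E ?q \<and> hd ?q = hd p \<and> last ?q = last p"
    by (rule someI[of _ p]) (use p in auto)
  then have "?q = p" using path_unique p by blast
  then show ?thesis unfolding path_order_def by simp
qed

lemma path_of_path_order:
  assumes "x \<in> V" "y \<in> V"
  obtains p where "is_path V E p" "hd p = x" "last p = y" "length p = path_order x y"
proof -
  have "connected_graph V E" using is_tree by (simp add: is_tree_def)
  then obtain p where p: "is_path V E p" "hd p = x" "last p = y"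
    using assms unfolding connected_graph_def by blast
  moreover have "length p = path_order x y" using path_order_path[OF p(1)] p by simp
  ultimately show ?thesis by (rule that)
qed

lemma path_order_sym: "x \<in> V \<Longrightarrow> y \<in> V \<Longrightarrow> path_order x y = path_order y x"
proof -
  assume "x \<in> V" "y \<in> V"
  then obtain p where p: "is_path V E p" "hd p = x" "last p = y" "length p = path_order x y"
    by (rule path_of_path_order)
  have "p \<noteq> []" using p(1) by (simp add: is_path_def)
  then show ?thesis
    using path_order_path[OF is_path_rev[OF simple p(1)]] p by (simp add: hd_rev last_rev)
qed

lemma path_order_refl: "x \<in> V \<Longrightarrow> path_order x x = 1"
  using path_order_path[OF is_path_singleton[of x V E]] by simp

lemma path_order_pos: "x \<in> V \<Longrightarrow> y \<in> V \<Longrightarrow> 0 < path_order x y"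
  by (metis path_of_path_order is_path_def length_greater_0_conv)

lemma path_order_eq_1_iff: "x \<in> V \<Longrightarrow> y \<in> V \<Longrightarrow> path_order x y = 1 \<longleftrightarrow> x = y"
proof
  assume "x \<in> V" "y \<in> V" "path_order x y = 1"
  then obtain p where "hd p = x" "last p = y" "length p = 1" by (metis path_of_path_order)
  then show "x = y" by (cases p) auto
qed (simp add: path_order_refl)

lemma path_order_edge: "E x y \<Longrightarrow> path_order x y = 2"
  using path_order_path[OF is_path_edge[OF simple]] by fastforce

lemma path_order_triangle:
  assumes "x \<in> V" "y \<in> V" "z \<in> V"
  shows "path_order x z + 1 \<le> path_order x y + path_order y z"
proof -
  obtain p where p: "is_path V E p" "hd p = x" "last p = y" "length p = path_order x y"
    using assms by (metis path_of_path_order)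
  obtain q where q: "is_path V E q" "hd q = y" "last q = z" "length q = path_order y z"
    using assms by (metis path_of_path_order)
  obtain p' where p': "p = p' @ [y]" using p by (metis append_butlast_last_id is_path_def)
  have "q \<noteq> []" using q(1) by (simp add: is_path_def)
  then obtain q' where q': "q = y # q'" using q(2) by (metis list.collapse)
  have "successively E (p' @ [y])" "successively E (y # q')"
    using p(1) q(1) unfolding p' q' is_path_iff_successively by blast+
  then have "successively E (p' @ y # q')" by (rule successively_append_Cons)
  moreover have "set (p' @ y # q') \<subseteq> V" using p(1) q(1) p' q' by (auto simp: is_path_def)
  ultimately obtain r where r: "is_path V E r" "hd r = hd (p' @ y # q')"
    "last r = last (p' @ y # q')" "length r \<le> length (p' @ y # q')"
    using path_from_walk by blast
  have "hd r = x" using r(2) p(2) p' by (cases p') simp_all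
  moreover have "last r = z" using r(3) q(3) q' by (cases q') simp_all
  ultimately
  have "path_order x z = length r" using path_order_path[OF r(1)] by simp
  then show ?thesis using r(4) p(4) q(4) p' q' by simp
qed

lemma tau_eq_Max_path_order: "v \<in> V \<Longrightarrow> tau V E v = Max (path_order v ` V)"
proof -
  assume v: "v \<in> V"
  have "{length p | p. is_path V E p \<and> (hd p = v \<or> last p = v)} = path_order v ` V"
  proof (intro equalityI subsetI)
    fix n assume "n \<in> {length p | p. is_path V E p \<and> (hd p = v \<or> last p = v)}"
    then obtain p where p: "n = length p" "is_path V E p" "hd p = v \<or> last p = v" by blast
    then have "path_order v (hd p) = n \<or> path_order v (last p) = n"
      using path_order_path[OF p(2)] path_order_sym is_path_ends_in[OF p(2)] by auto
    then show "n \<in> path_order v ` V" using is_path_ends_in[OF p(2)] by blast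
  next
    fix n assume "n \<in> path_order v ` V"
    then show "n \<in> {length p | p. is_path V E p \<and> (hd p = v \<or> last p = v)}"
      using v by (force elim: path_of_path_order)
  qed
  then show ?thesis unfolding tau_def by simp
qed

lemma path_order_nth:
  assumes P: "is_path V E P" and "i < length P" "j < length P"
  shows "path_order (P ! i) (P ! j) = (i - j) + (j - i) + 1"
proof -
  have *: "path_order (P ! i) (P ! j) = j - i + 1" if "i \<le> j" "j < length P" for i j
  proof -
    define q where "q = take (j - i + 1) (drop i P)"
    have q: "is_path V E q" unfolding q_def using that by (intro is_path_take is_path_drop P) auto
    have len: "length q = j - i + 1" and "hd q = P ! i"
      using that by (auto simp: q_def hd_drop_conv_nth)
    moreover have "last q = P ! j"
      using that len by (subst last_conv_nth) (auto simp: q_def)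
    ultimately show ?thesis using path_order_path[OF q] by simp
  qed
  have "P ! i \<in> V" "P ! j \<in> V" using P assms by (auto simp: is_path_def)
  then show ?thesis using *[of i j] *[of j i] assms path_order_sym by (cases "i \<le> j") auto
qed


definition longest_path :: "'a list \<Rightarrow> bool" where
  "longest_path P \<longleftrightarrow> is_path V E P \<and> (\<forall>p. is_path V E p \<longrightarrow> length p \<le> length P)"

lemma longest_path_exists: "\<exists>P. longest_path P"
proof -
  define S where "S = {length p | p. is_path V E p}"
  have "S \<subseteq> {..card V}"
    by (auto simp: S_def is_path_def distinct_card[symmetric] intro!: card_mono finite_vertices)
  then have "finite S" by (rule finite_subset) simp
  obtain x where "x \<in> V" using is_tree by (auto simp: is_tree_def)
  then have "1 \<in> S" unfolding S_def using is_path_singleton[of x V E] by force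
  then have "Max S \<in> S" using \<open>finite S\<close> by (intro Max_in) auto
  then obtain P where P: "is_path V E P" "length P = Max S" unfolding S_def by auto
  have "\<forall>p. is_path V E p \<longrightarrow> length p \<le> length P"
    using P \<open>finite S\<close> unfolding S_def by (auto intro: Max_ge)
  then show ?thesis using P by (auto simp: longest_path_def)
qed

lemma path_order_le_longest:
  "longest_path P \<Longrightarrow> x \<in> V \<Longrightarrow> y \<in> V \<Longrightarrow> path_order x y \<le> length P"
  by (metis path_of_path_order longest_path_def)

lemma tau_le_longest:
  assumes "longest_path P" "v \<in> V"
  shows "tau V E v \<le> length P"
proof -
  have "Max (path_order v ` V) \<le> length P"
    using assms finite_vertices path_order_le_longest by (subst Max_le_iff) auto
  then show ?thesis using tau_eq_Max_path_order[OF assms(2)] by simp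
qed

definition closest_on :: "'a list \<Rightarrow> 'a \<Rightarrow> nat \<Rightarrow> bool" where
  "closest_on P v j \<longleftrightarrow> j < length P \<and> (\<forall>i<length P. path_order v (P ! j) \<le> path_order v (P ! i))"

lemma closest_on_exists: "P \<noteq> [] \<Longrightarrow> \<exists>j. closest_on P v j"
  using ex_has_least_nat[of "\<lambda>i. i < length P" 0 "\<lambda>i. path_order v (P ! i)"]
  by (auto simp: closest_on_def)

lemma closest_path_avoids_tail:
  assumes P: "is_path V E P" and j: "closest_on P v j"
    and R: "is_path V E R" "hd R = v" "last R = P ! j"
  shows "set R \<inter> set (drop (Suc j) P) = {}"
proof (rule ccontr)
  assume "set R \<inter> set (drop (Suc j) P) \<noteq> {}"
  then obtain y where y: "y \<in> set R" "y \<in> set (drop (Suc j) P)" by blast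
  then obtain t where "t < length (drop (Suc j) P)" "drop (Suc j) P ! t = y"
    by (metis in_set_conv_nth)
  then have t: "P ! (Suc j + t) \<in> set R" "Suc j + t < length P" using y(1) by auto
  define i where "i = Suc j + t"
  have yR: "P ! i \<in> set R" and i: "j < i" "i < length P" using t by (auto simp: i_def)
  have "P ! i \<noteq> P ! j" using P i by (auto simp: is_path_def nth_eq_iff_index_eq)
  obtain R1 R2 where R12: "R = R1 @ P ! i # R2" using yR by (meson split_list)
  then have "R2 \<noteq> []" using R(3) \<open>P ! i \<noteq> P ! j\<close> by auto
  have "is_path V E (take (Suc (length R1)) R)" using R(1) by (rule is_path_take) simp
  then have "is_path V E (R1 @ [P ! i])" using R12 by simp
  then have "path_order v (P ! i) = Suc (length R1)"
    using path_order_path[of "R1 @ [P ! i]"] R(2) R12 by (cases R1) auto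
  also have "\<dots> < length R" using R12 \<open>R2 \<noteq> []\<close> by simp
  also have "\<dots> = path_order v (P ! j)" using path_order_path[OF R(1)] R by simp
  also have "\<dots> \<le> path_order v (P ! i)" using j i by (simp add: closest_on_def)
  finally show False by simp
qed

lemma path_order_last_ge_closest:
  assumes P: "is_path V E P" and v: "v \<in> V" and j: "closest_on P v j"
  shows "path_order v (P ! j) + (length P - 1 - j) \<le> path_order v (last P)"
proof (cases "Suc j = length P")
  case True
  then have "last P = P ! j" using P by (simp add: is_path_def last_conv_nth True[symmetric])
  then show ?thesis using True by simp
next
  case False
  then have j1: "Suc j < length P" using j by (simp add: closest_on_def)
  have "P ! j \<in> V" using P j1 by (simp add: is_path_def subset_iff)
  then obtain R where R: "is_path V E R" "hd R = v" "last R = P ! j" "length R = path_order v (P ! j)"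
    using v by (metis path_of_path_order)
  define Q where "Q = drop (Suc j) P"
  have "is_path V E (R @ Q)"
  proof (rule is_path_append)
    show "is_path V E Q" unfolding Q_def using P j1 by (rule is_path_drop)
    show "set R \<inter> set Q = {}" unfolding Q_def using closest_path_avoids_tail[OF P j R(1-3)] .
    show "E (last R) (hd Q)" using P j1 R(3) by (simp add: Q_def hd_drop_conv_nth is_path_def)
  qed (rule R(1))
  moreover have "R \<noteq> []" "Q \<noteq> []" using R(1) j1 by (auto simp: Q_def is_path_def)
  ultimately have "path_order v (last P) = length R + length Q"
    using path_order_path[of "R @ Q"] R(2) by (simp add: Q_def)
  then show ?thesis using R(4) by (simp add: Q_def)
qed

lemma path_order_hd_ge_closest:
  assumes P: "is_path V E P" and v: "v \<in> V" and j: "closest_on P v j"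
  shows "path_order v (P ! j) + j \<le> path_order v (hd P)"
proof -
  have j: "j < length P" "\<forall>i<length P. path_order v (P ! j) \<le> path_order v (P ! i)"
    using j by (auto simp: closest_on_def)
  then have "closest_on (rev P) v (length P - 1 - j)"
    by (auto simp: closest_on_def rev_nth)
  then have "path_order v (rev P ! (length P - 1 - j)) + (length P - 1 - (length P - 1 - j))
      \<le> path_order v (last (rev P))"
    using path_order_last_ge_closest[OF is_path_rev[OF simple P] v] by simp
  then show ?thesis using j(1) by (simp add: rev_nth last_rev)
qed

lemma path_order_le_via_closest:
  assumes P: "longest_path P" and v: "v \<in> V" and j: "closest_on P v j" and w: "w \<in> V"
  shows "path_order v w \<le> path_order v (P ! j) + max j (length P - 1 - j)"
proof -
  let ?m = "length P"
  have Pp: "is_path V E P" using P by (simp add: longest_path_def)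
  then have "P \<noteq> []" by (simp add: is_path_def)
  then obtain k where k: "closest_on P w k" using closest_on_exists by blast
  have PV: "\<And>i. i < ?m \<Longrightarrow> P ! i \<in> V" using Pp by (auto simp: is_path_def)
  have jk: "j < ?m" "k < ?m" using j k by (auto simp: closest_on_def)
  have "path_order w (hd P) \<le> ?m" "path_order w (last P) \<le> ?m"
    using path_order_le_longest[OF P w] is_path_ends_in[OF Pp] by auto
  then have "path_order w (P ! k) + (?m - 1 - k) \<le> ?m" "path_order w (P ! k) + k \<le> ?m"
    using path_order_last_ge_closest[OF Pp w k] path_order_hd_ge_closest[OF Pp w k] by linarith+
  moreover have "path_order v w + 1 \<le> path_order v (P ! k) + path_order w (P ! k)"
    using path_order_triangle[OF v PV[OF jk(2)] w] path_order_sym[OF w PV[OF jk(2)]] by simp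
  moreover have "path_order v (P ! k) + 1 \<le> path_order v (P ! j) + ((j - k) + (k - j) + 1)"
    using path_order_triangle[OF v PV[OF jk(1)] PV[OF jk(2)]] path_order_nth[OF Pp jk] by simp
  ultimately show ?thesis using jk by (simp add: max_def; linarith)
qed

lemma tau_via_closest:
  assumes P: "longest_path P" and v: "v \<in> V" and j: "closest_on P v j"
  shows "tau V E v = path_order v (P ! j) + max j (length P - 1 - j)"
proof -
  let ?b = "path_order v (P ! j) + max j (length P - 1 - j)"
  have Pp: "is_path V E P" using P by (simp add: longest_path_def)
  have ends: "hd P \<in> V" "last P \<in> V" using is_path_ends_in[OF Pp] by auto
  have "Max (path_order v ` V) = ?b"
  proof (rule Max_eqI)
    show "finite (path_order v ` V)" using finite_vertices by simp
    show "y \<le> ?b" if "y \<in> path_order v ` V" for y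
      using path_order_le_via_closest[OF P v j] that by blast
    have "path_order v (P ! j) + (length P - 1 - j) \<le> path_order v (last P)"
      "path_order v (P ! j) + j \<le> path_order v (hd P)"
      using path_order_last_ge_closest[OF Pp v j] path_order_hd_ge_closest[OF Pp v j] by auto
    moreover have "path_order v (last P) \<le> ?b" "path_order v (hd P) \<le> ?b"
      using path_order_le_via_closest[OF P v j] ends by auto
    ultimately have "path_order v (last P) = ?b \<or> path_order v (hd P) = ?b"
      by (cases "j \<le> length P - 1 - j") (simp_all add: max_def)
    then show "?b \<in> path_order v ` V" using ends by force
  qed
  then show ?thesis using tau_eq_Max_path_order[OF v] by simp
qed

lemma tau_longest_path_nth:
  assumes P: "longest_path P" and i: "i < length P"
  shows "tau V E (P ! i) = spine_detour (length P) i"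
proof -
  have PV: "\<And>k. k < length P \<Longrightarrow> P ! k \<in> V" using P by (auto simp: longest_path_def is_path_def)
  have "closest_on P (P ! i) i"
    using i path_order_refl path_order_pos PV by (auto simp: closest_on_def Suc_leI)
  then show ?thesis
    using tau_via_closest[OF P PV[OF i]] path_order_refl[OF PV[OF i]] by (simp add: spine_detour_def)
qed


lemma min_detour_le_tau:
  assumes P: "longest_path P" and v: "v \<in> V"
  shows "min_detour (length P) \<le> tau V E v"
    and "v \<notin> set P \<Longrightarrow> min_detour (length P) < tau V E v"
proof -
  have "P \<noteq> []" using P by (simp add: longest_path_def is_path_def)
  then obtain j where j: "closest_on P v j" using closest_on_exists by blast
  have jP: "j < length P" "P ! j \<in> V" using j P by (auto simp: closest_on_def longest_path_def is_path_def)
  have pos: "0 < path_order v (P ! j)" using path_order_pos[OF v jP(2)] .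
  have tau: "tau V E v = (path_order v (P ! j) - 1) + spine_detour (length P) j"
    using tau_via_closest[OF P v j] pos by (simp add: spine_detour_def)
  have min: "min_detour (length P) \<le> spine_detour (length P) j"
    using jP(1) by (rule min_detour_le_spine_detour)
  then show "min_detour (length P) \<le> tau V E v" using tau by simp
  assume "v \<notin> set P"
  then have "v \<noteq> P ! j" using jP(1) by auto
  then have "path_order v (P ! j) \<noteq> 1" using path_order_eq_1_iff[OF v jP(2)] by simp
  then show "min_detour (length P) < tau V E v" using tau min pos by simp
qed

lemma card_spine_tau:
  assumes P: "longest_path P"
  shows "card {v \<in> set P. tau V E v = t} = card {i. i < length P \<and> spine_detour (length P) i = t}"
proof -
  have "{v \<in> set P. tau V E v = t} = (\<lambda>i. P ! i) ` {i. i < length P \<and> spine_detour (length P) i = t}"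
    using tau_longest_path_nth[OF P] by (auto simp: in_set_conv_nth)
  moreover have "inj_on (\<lambda>i. P ! i) {i. i < length P \<and> spine_detour (length P) i = t}"
    using P by (auto simp: inj_on_def nth_eq_iff_index_eq longest_path_def is_path_def)
  ultimately show ?thesis by (simp add: card_image)
qed

theorem detour_seq_eq_detour_pattern:
  "\<exists>m ks. 0 < m \<and> length ks = m - min_detour m \<and> (\<forall>j<length ks. 2 \<le> ks ! j)
     \<and> detour_seq V E = detour_pattern m ks"
proof -
  obtain P where P: "longest_path P" using longest_path_exists by blast
  define m where "m = length P"
  define ks where "ks = map (\<lambda>j. card {v \<in> V. tau V E v = min_detour m + 1 + j}) [0..<m - min_detour m]"
  have m: "0 < m" using P by (simp add: m_def longest_path_def is_path_def)
  have spine: "set P \<subseteq> V" using P by (simp add: longest_path_def is_path_def)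
  have count: "card {v \<in> V. tau V E v = t} = count (mset (detour_pattern m ks)) t" for t
  proof -
    consider (min) "t = min_detour m" | (mid) "min_detour m < t \<and> t \<le> m"
      | (out) "t \<noteq> min_detour m \<and> \<not> (min_detour m < t \<and> t \<le> m)" by blast
    then show ?thesis
    proof cases
      case min
      then have "{v \<in> V. tau V E v = t} = {v \<in> set P. tau V E v = t}"
        using min_detour_le_tau(2)[OF P] spine by (force simp: m_def)
      then show ?thesis
        using card_spine_tau[OF P] card_spine_detour[OF m] min by (simp add: count_detour_pattern m_def)
    next
      case mid
      then show ?thesis by (auto simp: count_detour_pattern ks_def)
    next
      case out
      then have "{v \<in> V. tau V E v = t} = {}"
        using min_detour_le_tau(1)[OF P] tau_le_longest[OF P] by (force simp: m_def)
      then have "card {v \<in> V. tau V E v = t} = 0" by (simp only: card.empty)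
      then show ?thesis using out by (auto simp: count_detour_pattern)
    qed
  qed
  have "2 \<le> ks ! j" if "j < length ks" for j
  proof -
    let ?t = "min_detour m + 1 + j"
    have "2 = card {v \<in> set P. tau V E v = ?t}"
      using card_spine_tau[OF P] card_spine_detour[OF m] that by (simp add: m_def ks_def)
    also have "\<dots> \<le> card {v \<in> V. tau V E v = ?t}"
      using spine finite_vertices by (intro card_mono) auto
    finally show ?thesis using that by (simp add: ks_def)
  qed
  moreover have "detour_seq V E = detour_pattern m ks"
    using finite_vertices count sorted_detour_pattern by (rule detour_seq_eqI)
  moreover have "length ks = m - min_detour m" by (simp add: ks_def)
  ultimately show ?thesis using m by blast
qed

lemma caterpillar_longest_path:
  assumes P: "is_path V E P"
    and legs: "\<And>v. v \<in> V \<Longrightarrow> v \<notin> set P \<Longrightarrow> \<exists>i. 0 < i \<and> Suc i < length P \<and> E v (P ! i)"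
  shows "longest_path P"
proof -
  let ?m = "length P"
  have PV: "\<And>i. i < ?m \<Longrightarrow> P ! i \<in> V" using P by (auto simp: is_path_def)
  have foot: "\<exists>i<?m. path_order x (P ! i) = 1 \<or> (path_order x (P ! i) = 2 \<and> 0 < i \<and> Suc i < ?m)"
    if x: "x \<in> V" for x
  proof (cases "x \<in> set P")
    case True
    then obtain i where "i < ?m" "x = P ! i" by (auto simp: in_set_conv_nth)
    then show ?thesis using path_order_refl x by auto
  next
    case False
    then obtain i where "0 < i" "Suc i < ?m" "E x (P ! i)" using legs[OF x] by blast
    then show ?thesis using path_order_edge by (intro exI[of _ i]) auto
  qed
  have bound: "path_order x y \<le> ?m" if x: "x \<in> V" and y: "y \<in> V" for x y
  proof -
    obtain i where i: "i < ?m" "path_order x (P ! i) = 1 \<or> (path_order x (P ! i) = 2 \<and> 0 < i \<and> Suc i < ?m)"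
      using foot[OF x] by blast
    obtain k where k: "k < ?m" "path_order y (P ! k) = 1 \<or> (path_order y (P ! k) = 2 \<and> 0 < k \<and> Suc k < ?m)"
      using foot[OF y] by blast
    have "path_order x y + 1 \<le> path_order x (P ! i) + path_order (P ! i) y"
      using path_order_triangle[OF x PV[OF i(1)] y] .
    moreover have "path_order (P ! i) y + 1 \<le> path_order (P ! i) (P ! k) + path_order y (P ! k)"
      using path_order_triangle[OF PV[OF i(1)] PV[OF k(1)] y] path_order_sym[OF y PV[OF k(1)]] by simp
    moreover have "path_order (P ! i) (P ! k) = (i - k) + (k - i) + 1"
      using path_order_nth[OF P i(1) k(1)] .
    ultimately show ?thesis using i k by linarith
  qed
  show ?thesis
    unfolding longest_path_def
    using P bound path_order_path is_path_ends_in by metis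
qed

lemma tau_caterpillar_leg:
  assumes P: "longest_path P" and v: "v \<in> V" "v \<notin> set P" and i: "i < length P" "E v (P ! i)"
  shows "tau V E v = Suc (spine_detour (length P) i)"
proof -
  have PV: "\<And>k. k < length P \<Longrightarrow> P ! k \<in> V" using P by (auto simp: longest_path_def is_path_def)
  have "2 \<le> path_order v (P ! k)" if "k < length P" for k
  proof -
    have "v \<noteq> P ! k" using v(2) that by auto
    then show ?thesis
      using path_order_eq_1_iff[OF v(1) PV[OF that]] path_order_pos[OF v(1) PV[OF that]] by linarith
  qed
  then have "closest_on P v i" using i path_order_edge by (simp add: closest_on_def)
  then show ?thesis
    using tau_via_closest[OF P v(1)] path_order_edge[OF i(2)] by (simp add: spine_detour_def)
qed

end

section \<open>Caterpillars\<close>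

text \<open>Spine \<open>0, \<dots>, m - 1\<close>; vertex \<open>m + i\<close> is a leaf attached to spine vertex \<open>L ! i\<close>.\<close>
definition caterpillar :: "nat \<Rightarrow> nat list \<Rightarrow> nat \<Rightarrow> nat \<Rightarrow> bool" where
  "caterpillar m L = parent_graph (\<lambda>n. if n < m then n - 1 else L ! (n - m)) (m + length L)"

context
  fixes m :: nat and L :: "nat list"
  assumes m: "0 < m" and L: "\<forall>p\<in>set L. 0 < p \<and> Suc p < m"
begin

lemma is_tree_caterpillar: "is_tree {0..<m + length L} (caterpillar m L)"
  unfolding caterpillar_def
proof (rule is_tree_parent_graph)
  fix n assume n: "0 < n" "n < m + length L"
  show "(if n < m then n - 1 else L ! (n - m)) < n"
  proof (cases "n < m")
    case False
    then have "L ! (n - m) \<in> set L" using n(2) by simp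
    then have "L ! (n - m) < m" using L by auto
    then show ?thesis using False by simp
  qed (use n in simp)
qed (use m in simp)

lemma is_path_caterpillar_spine: "is_path {0..<m + length L} (caterpillar m L) [0..<m]"
  using m by (auto simp: is_path_def caterpillar_def parent_graph_def)

lemma caterpillar_leg:
  assumes "i < length L"
  shows "caterpillar m L (m + i) (L ! i)"
proof -
  have "L ! i < m" using L nth_mem[OF assms] by auto
  then show ?thesis using assms m by (simp add: caterpillar_def parent_graph_def)
qed

lemma tau_caterpillar:
  assumes n: "n < m + length L"
  shows "tau {0..<m + length L} (caterpillar m L) n =
    (if n < m then spine_detour m n else Suc (spine_detour m (L ! (n - m))))"
proof -
  interpret tree_graph "{0..<m + length L}" "caterpillar m L" by (rule tree_graph.intro[OF is_tree_caterpillar])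
  have "longest_path [0..<m]"
  proof (rule caterpillar_longest_path[OF is_path_caterpillar_spine])
    fix v assume "v \<in> {0..<m + length L}" "v \<notin> set [0..<m]"
    then have v: "v = m + (v - m)" "v - m < length L" by auto
    then have "0 < L ! (v - m)" "Suc (L ! (v - m)) < m" using L nth_mem[of "v - m" L] by auto
    moreover have "caterpillar m L v (L ! (v - m))" using caterpillar_leg[OF v(2)] v(1) by simp
    ultimately show "\<exists>i. 0 < i \<and> Suc i < length [0..<m] \<and> caterpillar m L v ([0..<m] ! i)"
      by (intro exI[of _ "L ! (v - m)"]) simp
  qed
  show ?thesis
  proof (cases "n < m")
    case True
    then show ?thesis using tau_longest_path_nth[OF \<open>longest_path [0..<m]\<close>, of n] by simp
  next
    case False
    then have "n - m < length L" using n by simp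
    then have "L ! (n - m) \<in> set L" "caterpillar m L n (L ! (n - m))"
      using caterpillar_leg[of "n - m"] False by auto
    then have "L ! (n - m) < m" "caterpillar m L n (L ! (n - m))" using L by auto
    then show ?thesis
      using tau_caterpillar_leg[OF \<open>longest_path [0..<m]\<close>, of n "L ! (n - m)"] n False by simp
  qed
qed

lemma detour_seq_caterpillar:
  "detour_seq {0..<m + length L} (caterpillar m L) =
    sort (map (spine_detour m) [0..<m] @ map (\<lambda>p. Suc (spine_detour m p)) L)"
proof -
  have "map (tau {0..<m + length L} (caterpillar m L)) [0..<m + length L] =
      map (spine_detour m) [0..<m] @ map (\<lambda>p. Suc (spine_detour m p)) L"
    by (rule nth_equalityI) (auto simp: tau_caterpillar nth_append)
  then show ?thesis
    unfolding detour_seq_def by (metis mset_map mset_upt sorted_list_of_multiset_mset)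
qed

end

lemma count_mset_map_upt: "count (mset (map f [0..<n])) t = card {i. i < n \<and> f i = t}"
  by (simp add: mset_map mset_upt count_image_mset_set Collect_conj_eq)

lemma detour_pattern_realised:
  assumes m: "0 < m" and ks: "length ks = m - min_detour m" "\<forall>j<length ks. 2 \<le> ks ! j"
  shows "\<exists>(V :: nat set) E. is_tree V E \<and> detour_seq V E = detour_pattern m ks"
proof -
  let ?a = "min_detour m" and ?l = "m - min_detour m"
  define L where "L = concat (map (\<lambda>j. replicate (ks ! j - 2) (?a - 1 + j)) [0..<?l])"
  have L: "\<forall>p\<in>set L. 0 < p \<and> Suc p < m"
    by (auto simp: L_def min_detour_def)
  have "map (\<lambda>p. Suc (spine_detour m p)) L = runs_above ?a (\<lambda>j. ks ! j - 2) ?l"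
    unfolding L_def runs_above_def map_concat
    by (auto simp: spine_detour_def min_detour_def max_def intro!: arg_cong[where f = concat])
  moreover have "mset (map (spine_detour m) [0..<m]) + mset (runs_above ?a (\<lambda>j. ks ! j - 2) ?l)
      = mset (detour_pattern m ks)"
  proof (rule multiset_eqI)
    fix t
    have "2 \<le> ks ! (t - ?a - 1)" if "?a < t" "t \<le> m" using ks that by auto
    then show "count (mset (map (spine_detour m) [0..<m]) + mset (runs_above ?a (\<lambda>j. ks ! j - 2) ?l)) t
        = count (mset (detour_pattern m ks)) t"
      unfolding count_union count_mset_map_upt card_spine_detour[OF m] count_runs_above
        count_detour_pattern
      by auto
  qed
  ultimately have "sort (map (spine_detour m) [0..<m] @ map (\<lambda>p. Suc (spine_detour m p)) L)
      = detour_pattern m ks"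
    by (intro properties_for_sort sorted_detour_pattern) simp
  then show ?thesis
    using is_tree_caterpillar[OF m L] detour_seq_caterpillar[OF m L] by metis
qed

theorem tree_detour_seq_iff:
  "(\<exists>(V :: nat set) E. is_tree V E \<and> detour_seq V E = s) \<longleftrightarrow>
    (\<exists>m ks. 0 < m \<and> length ks = m - min_detour m \<and> (\<forall>j<length ks. 2 \<le> ks ! j)
       \<and> s = detour_pattern m ks)"
proof
  assume "\<exists>(V :: nat set) E. is_tree V E \<and> detour_seq V E = s"
  then obtain V :: "nat set" and E where "is_tree V E" "detour_seq V E = s" by blast
  then show "\<exists>m ks. 0 < m \<and> length ks = m - min_detour m \<and> (\<forall>j<length ks. 2 \<le> ks ! j)
      \<and> s = detour_pattern m ks"
    using tree_graph.detour_seq_eq_detour_pattern[OF tree_graph.intro] by metis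
qed (use detour_pattern_realised in blast)

lemma detour_pattern_small: "detour_pattern 1 ks = [1]" "detour_pattern 2 ks = [2, 2]"
proof -
  have "min_detour 1 = 1" "min_detour 2 = 2" by (simp_all add: min_detour_def)
  then show "detour_pattern 1 ks = [1]" "detour_pattern 2 ks = [2, 2]"
    by (simp_all add: detour_pattern_def runs_above_def eval_nat_numeral)
qed

lemma detour_pattern_form_iff:
  "(s = [1] \<or> s = [2, 2] \<or>
     (\<exists>m a l k ks. m \<ge> 3 \<and> a = nat \<lceil>real (m + 1) / 2\<rceil> \<and> l = m - a
        \<and> k = (if odd m then 1 else 2)
        \<and> length ks = l \<and> (\<forall>j<l. ks ! j \<ge> 2)
        \<and> s = replicate k a @ concat (map (\<lambda>j. replicate (ks ! j) (a + 1 + j)) [0..<l])))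
   \<longleftrightarrow> (\<exists>m ks. 0 < m \<and> length ks = m - min_detour m \<and> (\<forall>j<length ks. 2 \<le> ks ! j)
          \<and> s = detour_pattern m ks)"
  (is "?lhs \<longleftrightarrow> ?rhs")
proof
  assume ?lhs
  then consider "s = [1]" | "s = [2, 2]"
    | m ks where "m \<ge> 3" "length ks = m - min_detour m" "\<forall>j<m - min_detour m. 2 \<le> ks ! j"
        "s = replicate (if odd m then 1 else 2) (min_detour m)
           @ concat (map (\<lambda>j. replicate (ks ! j) (min_detour m + 1 + j)) [0..<m - min_detour m])"
    unfolding nat_ceiling_half by blast
  then show ?rhs
  proof cases
    case 1
    then show ?thesis
      using detour_pattern_small by (intro exI[of _ 1] exI[of _ "[]"]) (simp add: min_detour_def)
  next
    case 2
    then show ?thesis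
      using detour_pattern_small by (intro exI[of _ 2] exI[of _ "[]"]) (simp add: min_detour_def)
  next
    case 3
    then show ?thesis
      by (intro exI[of _ m] exI[of _ ks]) (simp add: detour_pattern_def runs_above_def)
  qed
next
  assume ?rhs
  then obtain m ks where m: "0 < m" "length ks = m - min_detour m" "\<forall>j<length ks. 2 \<le> ks ! j"
    "s = detour_pattern m ks" by blast
  consider "m = 1" | "m = 2" | "m \<ge> 3" using m(1) by linarith
  then show ?lhs
  proof cases
    case 3
    then show ?thesis
      unfolding nat_ceiling_half using m
      by (intro disjI2 exI[of _ m] exI[of _ "min_detour m"] exI[of _ "m - min_detour m"]
          exI[of _ "if odd m then 1 else 2"] exI[of _ ks]) (simp add: detour_pattern_def runs_above_def)
  qed (use m detour_pattern_small in simp_all)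
qed

theorem theorem1p11:
  fixes s :: "nat list"
  assumes "sorted s" and "\<forall>x\<in>set s. 0 < x"
  shows "(\<exists>(V :: nat set) E. is_tree V E \<and> detour_seq V E = s) \<longleftrightarrow>
    (s = [1] \<or> s = [2, 2] \<or>
     (\<exists>m a l k ks. m \<ge> 3 \<and> a = nat \<lceil>real (m + 1) / 2\<rceil> \<and> l = m - a
        \<and> k = (if odd m then 1 else 2)
        \<and> length ks = l \<and> (\<forall>j<l. ks ! j \<ge> 2)
        \<and> s = replicate k a @ concat (map (\<lambda>j. replicate (ks ! j) (a + 1 + j)) [0..<l])))"
  unfolding detour_pattern_form_iff by (rule tree_detour_seq_iff)

end
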